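(* Let $N$ be an NFA with vertex set $V$, let $L_0$ be a backward-admissible initial partition of $V$, and let $\sim$ be an equivalence relation on $V$ refining $\sim_{\mathrm{bwd}(L_0)}$. Let $\bar N$ be the NFA obtained by grouping $N$ by $\sim$. Then $\bar N$ has a conflict if and only if $N$ has a conflict.
   Context: An NFA $N$ over a finite alphabet $A$, with action set $T$ and a relation $\mathrm{conf}\subseteq T\times T$, consists of a finite vertex set $V$, a starting vertex $v_s\in V$, an accepting action set $T_v\subseteq T$ for each $v\in V$, and a set of labeled edges $v\xrightarrow{\lambda}w$ with $v,w\in V$ and $\lambda\in A\cup\{\varepsilon\}$. For $U,W\subseteq T$, $\mathrm{conf}(U,W)$ means $\mathrm{conf}(a,b)$ for some $a\in U,b\in W$. For a vertex $u$ and a finite sequence $\tau=\tau_1\cdots\tau_r$ ($r\ge0$) with $\tau_i\in A\cup\{\varepsilon\}$, a vertex $w$ is reachable from $u$ on $\tau$ if there are vertices $u=v_1,\dots,v_{r+1}=w$ with an edge $v_i\xrightarrow{\tau_i}v_{i+1}$ for each $i$; $w$ is reachable from $u$ on a string $\zeta\in A^*$ if it is reachable on some sequence whose concatenation (reading $\varepsilon$ as the empty string) equals $\zeta$. A conflict in $N$ consists of two (not necessarily distinct) vertices $w,w'$ both reachable from $v_s$ on the same string $\zeta\in A^*$ with $\mathrm{conf}(T_w,T_{w'})$. Given an equivalence relation $\sim$ on $V$, the grouped NFA $\bar N$ has as vertices the equivalence classes, starting vertex the class of $v_s$, action sets $T_{\bar v}=\bigcup_{v\in\bar v}T_v$, and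 an edge $\bar v\xrightarrow{\lambda}\bar w$ iff some $v\in\bar v$, $w\in\bar w$ have an edge $v\xrightarrow{\lambda}w$ in $N$. For a partition $L_0$ of $V$ write $[v]_{L_0}$ for the set of $L_0$ containing $v$; $L_0$ is a backward-admissible initial partition if for all vertices $v_1,v_2$ with $\mathrm{conf}(T_{v_1},T_{v_2})$ and all $v_1'\in[v_1]_{L_0}$, $v_2'\in[v_2]_{L_0}$ that are reachable from $v_s$ on a common string, we have $\mathrm{conf}(T_{v_1'},T_{v_2'})$. Vertices $v_1,v_2$ are backward-equivalent with respect to $L_0$, $v_1\sim_{\mathrm{bwd}(L_0)}v_2$, if for every $Z\in L_0$ and every finite sequence $\tau$ over $A\cup\{\varepsilon\}$, some element of $Z$ is reachable from $v_1$ on $\tau$ iff some element of $Z$ is reachable from $v_2$ on $\tau$. *)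

theory Defs
  imports Main "HOL-Library.Disjoint_Sets"
begin

text \<open>Labels: None stands for epsilon, Some a for a letter a of the alphabet.
  Edges are triples (v, lambda, w).\<close>

fun reach_seq :: "('v \<times> 'a option \<times> 'v) set \<Rightarrow> 'v \<Rightarrow> 'a option list \<Rightarrow> 'v \<Rightarrow> bool" where
  "reach_seq E u [] w = (u = w)"
| "reach_seq E u (l # \<tau>) w = (\<exists>v. (u, l, v) \<in> E \<and> reach_seq E v \<tau> w)"

definition word_of :: "'a option list \<Rightarrow> 'a list" where
  "word_of \<tau> = concat (map (\<lambda>x. case x of None \<Rightarrow> [] | Some a \<Rightarrow> [a]) \<tau>)"

definition reach_str :: "('v \<times> 'a option \<times> 'v) set \<Rightarrow> 'v \<Rightarrow> 'a list \<Rightarrow> 'v \<Rightarrow> bool" where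
  "reach_str E u \<zeta> w = (\<exists>\<tau>. reach_seq E u \<tau> w \<and> word_of \<tau> = \<zeta>)"

definition conf_sets :: "('t \<times> 't) set \<Rightarrow> 't set \<Rightarrow> 't set \<Rightarrow> bool" where
  "conf_sets conf U W = (\<exists>a\<in>U. \<exists>b\<in>W. (a, b) \<in> conf)"

definition is_nfa :: "'a set \<Rightarrow> 't set \<Rightarrow> ('t \<times> 't) set \<Rightarrow> 'v set \<Rightarrow> 'v \<Rightarrow> ('v \<Rightarrow> 't set)
    \<Rightarrow> ('v \<times> 'a option \<times> 'v) set \<Rightarrow> bool" where
  "is_nfa A T conf V vs Tv E \<longleftrightarrow> finite A \<and> conf \<subseteq> T \<times> T \<and> finite V \<and> vs \<in> V
     \<and> (\<forall>v\<in>V. Tv v \<subseteq> T) \<and> E \<subseteq> V \<times> (insert None (Some ` A)) \<times> V"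

definition has_conflict :: "('t \<times> 't) set \<Rightarrow> 'v \<Rightarrow> ('v \<Rightarrow> 't set)
    \<Rightarrow> ('v \<times> 'a option \<times> 'v) set \<Rightarrow> bool" where
  "has_conflict conf vs Tv E \<longleftrightarrow>
     (\<exists>w w' \<zeta>. reach_str E vs \<zeta> w \<and> reach_str E vs \<zeta> w' \<and> conf_sets conf (Tv w) (Tv w'))"

definition grp_start :: "('v \<times> 'v) set \<Rightarrow> 'v \<Rightarrow> 'v set" where
  "grp_start R vs = R `` {vs}"

definition grp_acc :: "('v \<Rightarrow> 't set) \<Rightarrow> 'v set \<Rightarrow> 't set" where
  "grp_acc Tv X = (\<Union>v\<in>X. Tv v)"

definition grp_edges :: "'v set \<Rightarrow> ('v \<times> 'v) set \<Rightarrow> ('v \<times> 'a option \<times> 'v) set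
    \<Rightarrow> ('v set \<times> 'a option \<times> 'v set) set" where
  "grp_edges V R E = {(X, l, Y). X \<in> V // R \<and> Y \<in> V // R \<and> (\<exists>v\<in>X. \<exists>w\<in>Y. (v, l, w) \<in> E)}"

definition bwd_admissible :: "('t \<times> 't) set \<Rightarrow> 'v set \<Rightarrow> 'v \<Rightarrow> ('v \<Rightarrow> 't set)
    \<Rightarrow> ('v \<times> 'a option \<times> 'v) set \<Rightarrow> 'v set set \<Rightarrow> bool" where
  "bwd_admissible conf V vs Tv E L0 \<longleftrightarrow> partition_on V L0 \<and>
     (\<forall>Z1\<in>L0. \<forall>Z2\<in>L0. \<forall>v1\<in>Z1. \<forall>v2\<in>Z2. \<forall>v1'\<in>Z1. \<forall>v2'\<in>Z2.
        conf_sets conf (Tv v1) (Tv v2) \<and> (\<exists>\<zeta>. reach_str E vs \<zeta> v1' \<and> reach_str E vs \<zeta> v2')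
        \<longrightarrow> conf_sets conf (Tv v1') (Tv v2'))"

definition bwd_equiv :: "'a set \<Rightarrow> ('v \<times> 'a option \<times> 'v) set \<Rightarrow> 'v set set \<Rightarrow> 'v \<Rightarrow> 'v \<Rightarrow> bool" where
  "bwd_equiv A E L0 v1 v2 \<longleftrightarrow>
     (\<forall>Z\<in>L0. \<forall>\<tau>. set \<tau> \<subseteq> insert None (Some ` A) \<longrightarrow>
        ((\<exists>w\<in>Z. reach_seq E v1 \<tau> w) \<longleftrightarrow> (\<exists>w\<in>Z. reach_seq E v2 \<tau> w)))"

end

theory Submission
  imports Defs
begin

text \<open>Projecting paths of \<open>N\<close> to equivalence classes turns a conflict of \<open>N\<close> into one of the
  grouped NFA. Conversely, each grouped step is an edge between some members of two classes, and
  backward equivalence lets us replay the rest of the path from any other member of the source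
  class, landing in the same block of \<open>L\<^sub>0\<close>. So for every vertex \<open>y\<close> of a class reached on \<open>\<zeta>\<close>,
  some vertex of \<open>y\<close>'s block is reached on \<open>\<zeta>\<close> in \<open>N\<close>, and backward admissibility transfers
  the conflict to these vertices.\<close>

lemma reach_seq_labels:
  assumes "E \<subseteq> V \<times> L \<times> V"
  shows "reach_seq E u \<tau> w \<Longrightarrow> set \<tau> \<subseteq> L"
  using assms by (induction \<tau> arbitrary: u) auto

lemma reach_seq_target:
  assumes "E \<subseteq> V \<times> L \<times> V"
  shows "reach_seq E u \<tau> w \<Longrightarrow> u \<in> V \<Longrightarrow> w \<in> V"
  using assms by (induction \<tau> arbitrary: u) auto

lemma grp_edges_subset:
  assumes "E \<subseteq> V \<times> L \<times> V"
  shows "grp_edges V R E \<subseteq> (V // R) \<times> L \<times> (V // R)"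
  using assms unfolding grp_edges_def by auto

lemma reach_seq_grp_edges_lift:
  assumes R: "equiv V R" and E: "E \<subseteq> V \<times> L \<times> V"
  shows "reach_seq E u \<tau> w \<Longrightarrow> u \<in> V \<Longrightarrow> reach_seq (grp_edges V R E) (R``{u}) \<tau> (R``{w})"
proof (induction \<tau> arbitrary: u)
  case Nil
  then show ?case by simp
next
  case (Cons l \<tau>)
  then obtain v where uv: "(u, l, v) \<in> E" and v: "reach_seq E v \<tau> w" by auto
  have "v \<in> V" using uv E by auto
  have "u \<in> R``{u}" "v \<in> R``{v}"
    using Cons.prems \<open>v \<in> V\<close> R by (auto simp: equiv_def refl_on_def)
  with uv Cons.prems \<open>v \<in> V\<close> have "(R``{u}, l, R``{v}) \<in> grp_edges V R E"
    unfolding grp_edges_def by (blast intro: quotientI)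
  with Cons.IH[OF v \<open>v \<in> V\<close>] show ?case by auto
qed

lemma bwd_equiv_reach_seq:
  assumes "bwd_equiv A E L0 v1 v2" and "Z \<in> L0" and "set \<tau> \<subseteq> insert None (Some ` A)"
    and "reach_seq E v1 \<tau> w" and "w \<in> Z"
  obtains w' where "w' \<in> Z" and "reach_seq E v2 \<tau> w'"
  using assms unfolding bwd_equiv_def by blast

lemma reach_seq_grp_edges_pullback:
  assumes R: "equiv V R" and E: "E \<subseteq> V \<times> insert None (Some ` A) \<times> V"
    and bwd: "\<forall>v1 v2. (v1, v2) \<in> R \<longrightarrow> bwd_equiv A E L0 v1 v2"
    and "Z \<in> L0" and "y \<in> Z"
  shows "reach_seq (grp_edges V R E) X \<tau> Y \<Longrightarrow> X \<in> V // R \<Longrightarrow> x \<in> X \<Longrightarrow> y \<in> Y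
    \<Longrightarrow> \<exists>w\<in>Z. reach_seq E x \<tau> w"
proof (induction \<tau> arbitrary: X x)
  case Nil
  then have "(y, x) \<in> R" using in_quotient_imp_in_rel[OF R] by auto
  with bwd have "bwd_equiv A E L0 y x" by blast
  then obtain w where "w \<in> Z" "reach_seq E x [] w"
    by (rule bwd_equiv_reach_seq[OF _ \<open>Z \<in> L0\<close>, where \<tau> = "[]"]) (use \<open>y \<in> Z\<close> in auto)
  then show ?case by blast
next
  case (Cons l \<tau>)
  then obtain X' where XX': "(X, l, X') \<in> grp_edges V R E"
    and X': "reach_seq (grp_edges V R E) X' \<tau> Y" by auto
  then obtain v v' where "X' \<in> V // R" "v \<in> X" "v' \<in> X'" and vv': "(v, l, v') \<in> E"
    unfolding grp_edges_def by auto
  with Cons.IH[OF X'] Cons.prems(4) obtain w where "w \<in> Z" "reach_seq E v' \<tau> w" by blast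
  with vv' have v: "reach_seq E v (l # \<tau>) w" by auto
  have "(v, x) \<in> R" using in_quotient_imp_in_rel[OF R] Cons.prems \<open>v \<in> X\<close> by auto
  moreover have "set (l # \<tau>) \<subseteq> insert None (Some ` A)"
    using reach_seq_labels[OF E v] .
  ultimately obtain w' where "w' \<in> Z" "reach_seq E x (l # \<tau>) w'"
    using bwd bwd_equiv_reach_seq[OF _ \<open>Z \<in> L0\<close> _ v \<open>w \<in> Z\<close>] by blast
  then show ?case by blast
qed

lemma reach_str_grp_edges_lift:
  assumes "equiv V R" and "E \<subseteq> V \<times> L \<times> V" and "vs \<in> V" and "reach_str E vs \<zeta> w"
  shows "reach_str (grp_edges V R E) (R``{vs}) \<zeta> (R``{w})" and "w \<in> V"
proof -
  obtain \<tau> where \<tau>: "reach_seq E vs \<tau> w" "word_of \<tau> = \<zeta>"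
    using assms(4) unfolding reach_str_def by auto
  show "reach_str (grp_edges V R E) (R``{vs}) \<zeta> (R``{w})"
    using reach_seq_grp_edges_lift[OF assms(1,2) \<tau>(1) assms(3)] \<tau>(2) unfolding reach_str_def by auto
  show "w \<in> V" using reach_seq_target[OF assms(2) \<tau>(1) assms(3)] .
qed

lemma reach_str_grp_edges_pullback:
  assumes R: "equiv V R" and E: "E \<subseteq> V \<times> insert None (Some ` A) \<times> V" and "vs \<in> V"
    and bwd: "\<forall>v1 v2. (v1, v2) \<in> R \<longrightarrow> bwd_equiv A E L0 v1 v2"
    and L0: "partition_on V L0"
    and reach: "reach_str (grp_edges V R E) (R``{vs}) \<zeta> Y" and "y \<in> Y"
  obtains Z y' where "Z \<in> L0" "y \<in> Z" "y' \<in> Z" "reach_str E vs \<zeta> y'"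
proof -
  obtain \<tau> where \<tau>: "reach_seq (grp_edges V R E) (R``{vs}) \<tau> Y" "word_of \<tau> = \<zeta>"
    using reach unfolding reach_str_def by auto
  have start: "R``{vs} \<in> V // R" "vs \<in> R``{vs}"
    using \<open>vs \<in> V\<close> R by (auto intro: quotientI simp: equiv_def refl_on_def)
  have "Y \<in> V // R"
    using reach_seq_target[OF grp_edges_subset[OF E] \<tau>(1) start(1)] .
  then have "y \<in> V" using \<open>y \<in> Y\<close> in_quotient_imp_subset[OF R] by blast
  then obtain Z where "Z \<in> L0" "y \<in> Z" using L0 unfolding partition_on_def by blast
  moreover obtain y' where "y' \<in> Z" "reach_seq E vs \<tau> y'"
    using reach_seq_grp_edges_pullback[OF R E bwd \<open>Z \<in> L0\<close> \<open>y \<in> Z\<close> \<tau>(1) start \<open>y \<in> Y\<close>] by blast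
  ultimately show thesis using that \<tau>(2) unfolding reach_str_def by blast
qed

lemma has_conflict_grouped_if_conflict:
  assumes "equiv V R" and "E \<subseteq> V \<times> L \<times> V" and "vs \<in> V" and "has_conflict conf vs Tv E"
  shows "has_conflict conf (grp_start R vs) (grp_acc Tv) (grp_edges V R E)"
proof -
  obtain w w' \<zeta> where w: "reach_str E vs \<zeta> w" and w': "reach_str E vs \<zeta> w'"
    and c: "conf_sets conf (Tv w) (Tv w')"
    using assms(4) unfolding has_conflict_def by auto
  note lift = reach_str_grp_edges_lift[OF assms(1-3)]
  have "w \<in> R``{w}" "w' \<in> R``{w'}"
    using lift(2)[OF w] lift(2)[OF w'] assms(1) by (auto simp: equiv_def refl_on_def)
  with c have "conf_sets conf (grp_acc Tv (R``{w})) (grp_acc Tv (R``{w'}))"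
    unfolding conf_sets_def grp_acc_def by blast
  with lift(1)[OF w] lift(1)[OF w'] show ?thesis
    unfolding has_conflict_def grp_start_def by blast
qed

lemma has_conflict_if_grouped_conflict:
  assumes R: "equiv V R" and E: "E \<subseteq> V \<times> insert None (Some ` A) \<times> V" and "vs \<in> V"
    and adm: "bwd_admissible conf V vs Tv E L0"
    and bwd: "\<forall>v1 v2. (v1, v2) \<in> R \<longrightarrow> bwd_equiv A E L0 v1 v2"
    and "has_conflict conf (grp_start R vs) (grp_acc Tv) (grp_edges V R E)"
  shows "has_conflict conf vs Tv E"
proof -
  obtain X X' \<zeta> where X: "reach_str (grp_edges V R E) (R``{vs}) \<zeta> X"
    and X': "reach_str (grp_edges V R E) (R``{vs}) \<zeta> X'"
    and c: "conf_sets conf (grp_acc Tv X) (grp_acc Tv X')"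
    using assms(6) unfolding has_conflict_def grp_start_def by auto
  then obtain v1 v2 where "v1 \<in> X" "v2 \<in> X'" and c12: "conf_sets conf (Tv v1) (Tv v2)"
    unfolding conf_sets_def grp_acc_def by auto
  have L0: "partition_on V L0" using adm unfolding bwd_admissible_def by auto
  note pullback = reach_str_grp_edges_pullback[OF R E \<open>vs \<in> V\<close> bwd L0]
  obtain Z1 v1' where "Z1 \<in> L0" "v1 \<in> Z1" "v1' \<in> Z1" and v1': "reach_str E vs \<zeta> v1'"
    using pullback[OF X \<open>v1 \<in> X\<close>] .
  moreover obtain Z2 v2' where "Z2 \<in> L0" "v2 \<in> Z2" "v2' \<in> Z2" and v2': "reach_str E vs \<zeta> v2'"
    using pullback[OF X' \<open>v2 \<in> X'\<close>] .
  ultimately have "conf_sets conf (Tv v1') (Tv v2')"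
    using adm c12 v1' v2' unfolding bwd_admissible_def by blast
  with v1' v2' show ?thesis unfolding has_conflict_def by blast
qed

theorem mainTheorem9:
  fixes A :: "'a set" and T :: "'t set" and conf :: "('t \<times> 't) set"
    and V :: "'v set" and vs :: 'v and Tv :: "'v \<Rightarrow> 't set"
    and E :: "('v \<times> 'a option \<times> 'v) set"
    and L0 :: "'v set set" and R :: "('v \<times> 'v) set"
  assumes "is_nfa A T conf V vs Tv E"
    and "bwd_admissible conf V vs Tv E L0"
    and "equiv V R"
    and "\<forall>v1 v2. (v1, v2) \<in> R \<longrightarrow> bwd_equiv A E L0 v1 v2"
  shows "has_conflict conf (grp_start R vs) (grp_acc Tv) (grp_edges V R E)
         \<longleftrightarrow> has_conflict conf vs Tv E"
proof -
  have E: "E \<subseteq> V \<times> insert None (Some ` A) \<times> V" and "vs \<in> V"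
    using assms(1) unfolding is_nfa_def by auto
  show ?thesis
    using has_conflict_if_grouped_conflict[OF assms(3) E \<open>vs \<in> V\<close> assms(2,4)]
      has_conflict_grouped_if_conflict[OF assms(3) E \<open>vs \<in> V\<close>]
    by blast
qed

end
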